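(* For the fractional scheduling problem without payments of a single task on $n$ machines, the proportional mechanism has approximation ratio $1$. When the proportional mechanism is run independently for each of $m$ tasks, its approximation ratio (for the fractional makespan) is at least $m$.
   Context: Fractional scheduling without payments: $n$ machines, $m$ divisible tasks; machine $i$ has private true times $t_{i,j}>0$ and declares $\hat t_{i,j}>0$. A mechanism outputs fractions $\alpha_{i,j}\in[0,1]$ with $\sum_i\alpha_{i,j}=1$ for each task $j$. Machines are bound by their declarations: machine $i$'s cost is $C_i=\sum_j\alpha_{i,j}\max\{\hat t_{i,j},t_{i,j}\}$ and the fractional makespan is $\max_iC_i$. The proportional mechanism for a single task with declarations $\hat t_1,\dots,\hat t_n$ gives machine $i$ the fraction $\alpha_i=\hat t_i^{-1}/\sum_{k=1}^n\hat t_k^{-1}$; for $m$ tasks it does this separately for each task $j$ using the declarations $\hat t_{1,j},\dots,\hat t_{n,j}$. (This mechanism is truthful.) The approximation ratio is the supremum over true instances $\mathbf t$ of the fractional makespan under truthful reports $\hat{\mathbf t}=\mathbf t$ divided by the optimal fractional makespan $\min_\alpha\max_i\sum_j\alpha_{i,j}t_{i,j}$. *)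

theory Defs
  imports "HOL-Analysis.Analysis"
begin

text \<open>Machines are indexed by i < n, tasks by j < m. Time matrices and fraction
matrices are functions nat => nat => real; only entries with i < n, j < m matter.\<close>

definition valid_times :: "nat \<Rightarrow> nat \<Rightarrow> (nat \<Rightarrow> nat \<Rightarrow> real) \<Rightarrow> bool" where
  "valid_times n m t \<longleftrightarrow> (\<forall>i<n. \<forall>j<m. t i j > 0)"

definition feasible_alloc :: "nat \<Rightarrow> nat \<Rightarrow> (nat \<Rightarrow> nat \<Rightarrow> real) \<Rightarrow> bool" where
  "feasible_alloc n m \<alpha> \<longleftrightarrow>
     (\<forall>i<n. \<forall>j<m. 0 \<le> \<alpha> i j \<and> \<alpha> i j \<le> 1) \<and> (\<forall>j<m. (\<Sum>i<n. \<alpha> i j) = 1)"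

text \<open>Cost of machine i when bound by declarations th and true times t.\<close>
definition machine_cost ::
  "nat \<Rightarrow> (nat \<Rightarrow> nat \<Rightarrow> real) \<Rightarrow> (nat \<Rightarrow> nat \<Rightarrow> real) \<Rightarrow> (nat \<Rightarrow> nat \<Rightarrow> real) \<Rightarrow> nat \<Rightarrow> real" where
  "machine_cost m \<alpha> th t i = (\<Sum>j<m. \<alpha> i j * max (th i j) (t i j))"

definition frac_makespan ::
  "nat \<Rightarrow> nat \<Rightarrow> (nat \<Rightarrow> nat \<Rightarrow> real) \<Rightarrow> (nat \<Rightarrow> nat \<Rightarrow> real) \<Rightarrow> (nat \<Rightarrow> nat \<Rightarrow> real) \<Rightarrow> real" where
  "frac_makespan n m \<alpha> th t = Max ((\<lambda>i. machine_cost m \<alpha> th t i) ` {..<n})"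

definition opt_frac_makespan :: "nat \<Rightarrow> nat \<Rightarrow> (nat \<Rightarrow> nat \<Rightarrow> real) \<Rightarrow> real" where
  "opt_frac_makespan n m t =
     Inf ((\<lambda>\<alpha>. Max ((\<lambda>i. \<Sum>j<m. \<alpha> i j * t i j) ` {..<n})) ` {\<alpha>. feasible_alloc n m \<alpha>})"

definition prop_mech :: "nat \<Rightarrow> (nat \<Rightarrow> nat \<Rightarrow> real) \<Rightarrow> nat \<Rightarrow> nat \<Rightarrow> real" where
  "prop_mech n th i j = inverse (th i j) / (\<Sum>k<n. inverse (th k j))"

text \<open>Approximation ratio of the proportional mechanism (supremum over true instances,
truthful reports th = t), as an extended real.\<close>
definition prop_approx_ratio :: "nat \<Rightarrow> nat \<Rightarrow> ereal" where
  "prop_approx_ratio n m =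
     (SUP t\<in>{t. valid_times n m t}.
        ereal (frac_makespan n m (prop_mech n t) t t / opt_frac_makespan n m t))"

end

theory Submission
  imports Defs "HOL-Real_Asymp.Real_Asymp"
begin

text \<open>
  Write \<open>S\<^sub>j = \<Sum>\<^sub>k 1/t\<^sub>k\<^sub>j\<close> for the total speed available for task \<open>j\<close>. The proportional
  mechanism loads every machine with exactly \<open>\<Sum>\<^sub>j 1/S\<^sub>j\<close>, while any fractional schedule
  has makespan at least \<open>1/S\<^sub>j\<close> for each single task \<open>j\<close>: if every machine has load
  at most \<open>M\<close>, it processes at most \<open>M/t\<^sub>i\<^sub>j\<close> of task \<open>j\<close>. For one task the two
  bounds coincide. For \<open>m \<le> n\<close> tasks, let machine \<open>j\<close> need time 1 for task \<open>j\<close> and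
  time \<open>L\<close> otherwise: assigning task \<open>j\<close> to machine \<open>j\<close> has makespan 1, whereas the
  proportional mechanism has makespan \<open>mL/(L+n-1)\<close>, which tends to \<open>m\<close> as \<open>L \<rightarrow> \<infinity>\<close>.
\<close>

lemma frac_makespan_truthful:
  "frac_makespan n m \<alpha> t t = Max ((\<lambda>i. \<Sum>j<m. \<alpha> i j * t i j) ` {..<n})"
  unfolding frac_makespan_def machine_cost_def by simp

lemma opt_frac_makespan_eq_INF:
  "opt_frac_makespan n m t = (INF \<alpha>\<in>{\<alpha>. feasible_alloc n m \<alpha>}. frac_makespan n m \<alpha> t t)"
  unfolding opt_frac_makespan_def frac_makespan_truthful ..

lemma sum_inverse_times_pos:
  assumes "valid_times n m t" "j < m" "n \<ge> 1"
  shows "(\<Sum>k<n. inverse (t k j)) > 0"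
  using assms unfolding valid_times_def
  by (intro sum_pos) (auto simp: lessThan_empty_iff)

lemma feasible_alloc_prop_mech:
  assumes "valid_times n m t" "n \<ge> 1"
  shows "feasible_alloc n m (prop_mech n t)"
  unfolding feasible_alloc_def
proof (intro conjI allI impI)
  fix i j assume ij: "i < n" "j < m"
  have "0 < t i j"
    using assms(1) ij unfolding valid_times_def by auto
  moreover have "0 < (\<Sum>k<n. inverse (t k j))"
    using sum_inverse_times_pos[OF assms(1) ij(2) assms(2)] .
  moreover have "inverse (t i j) \<le> (\<Sum>k<n. inverse (t k j))"
    using assms(1) ij unfolding valid_times_def
    by (intro member_le_sum) (auto simp: less_imp_le)
  ultimately show "0 \<le> prop_mech n t i j" "prop_mech n t i j \<le> 1"
    unfolding prop_mech_def by simp_all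
next
  fix j assume "j < m"
  then have "0 < (\<Sum>k<n. inverse (t k j))"
    using sum_inverse_times_pos[OF assms(1) _ assms(2)] by blast
  then show "(\<Sum>i<n. prop_mech n t i j) = 1"
    unfolding prop_mech_def by (simp add: sum_divide_distrib[symmetric])
qed

lemma frac_makespan_prop_mech:
  assumes "valid_times n m t" "n \<ge> 1"
  shows "frac_makespan n m (prop_mech n t) t t = (\<Sum>j<m. 1 / (\<Sum>k<n. inverse (t k j)))"
proof -
  have "prop_mech n t i j * t i j = 1 / (\<Sum>k<n. inverse (t k j))" if "i < n" "j < m" for i j
  proof -
    have "t i j \<noteq> 0"
      using assms(1) that unfolding valid_times_def by fastforce
    then show ?thesis
      unfolding prop_mech_def by (simp add: field_simps)
  qed
  then have "(\<lambda>i. \<Sum>j<m. prop_mech n t i j * t i j) ` {..<n}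
      = (\<lambda>_. \<Sum>j<m. 1 / (\<Sum>k<n. inverse (t k j))) ` {..<n}"
    by (intro image_cong sum.cong) auto
  then show ?thesis
    using assms(2) by (simp add: frac_makespan_truthful lessThan_empty_iff)
qed

lemma inverse_speed_sum_le_frac_makespan:
  assumes "valid_times n m t" "feasible_alloc n m \<alpha>" "j < m" "n \<ge> 1"
  shows "1 / (\<Sum>k<n. inverse (t k j)) \<le> frac_makespan n m \<alpha> t t"
proof -
  define M where "M = frac_makespan n m \<alpha> t t"
  have share_le: "\<alpha> i j \<le> M * inverse (t i j)" if i: "i < n" for i
  proof -
    have "\<alpha> i j * t i j \<le> (\<Sum>j<m. \<alpha> i j * t i j)"
      using assms i unfolding valid_times_def feasible_alloc_def
      by (intro member_le_sum) (auto simp: less_imp_le)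
    also have "\<dots> \<le> M"
      unfolding M_def frac_makespan_truthful using i by (intro Max_ge) auto
    finally show ?thesis
      using assms(1) i assms(3) unfolding valid_times_def by (simp add: field_simps)
  qed
  have "1 = (\<Sum>i<n. \<alpha> i j)"
    using assms unfolding feasible_alloc_def by auto
  also have "\<dots> \<le> M * (\<Sum>i<n. inverse (t i j))"
    unfolding sum_distrib_left using share_le by (intro sum_mono) auto
  finally show ?thesis
    using sum_inverse_times_pos[OF assms(1,3,4)] unfolding M_def by (simp add: field_simps)
qed

lemma inverse_speed_sum_le_opt_frac_makespan:
  assumes "valid_times n m t" "j < m" "n \<ge> 1"
  shows "1 / (\<Sum>k<n. inverse (t k j)) \<le> opt_frac_makespan n m t"
  unfolding opt_frac_makespan_eq_INF
  using feasible_alloc_prop_mech[OF assms(1,3)] inverse_speed_sum_le_frac_makespan[OF assms(1) _ assms(2,3)]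
  by (intro cINF_greatest) auto

lemma opt_frac_makespan_le:
  assumes "valid_times n m t" "feasible_alloc n m \<alpha>" "m \<ge> 1" "n \<ge> 1"
  shows "opt_frac_makespan n m t \<le> frac_makespan n m \<alpha> t t"
  unfolding opt_frac_makespan_eq_INF
proof (rule cINF_lower)
  show "bdd_below ((\<lambda>\<alpha>. frac_makespan n m \<alpha> t t) ` {\<alpha>. feasible_alloc n m \<alpha>})"
    using inverse_speed_sum_le_frac_makespan[OF assms(1) _ _ assms(4), of _ 0] assms(3)
    by (intro bdd_belowI2) auto
qed (use assms(2) in simp)

lemma prop_mech_ratio_single_task:
  assumes "valid_times n 1 t" "n \<ge> 1"
  shows "frac_makespan n 1 (prop_mech n t) t t / opt_frac_makespan n 1 t = 1"
proof -
  have makespan: "frac_makespan n 1 (prop_mech n t) t t = 1 / (\<Sum>k<n. inverse (t k 0))"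
    using frac_makespan_prop_mech[OF assms] by simp
  moreover have "opt_frac_makespan n 1 t = 1 / (\<Sum>k<n. inverse (t k 0))"
    using opt_frac_makespan_le[OF assms(1) feasible_alloc_prop_mech[OF assms]] assms(2)
      inverse_speed_sum_le_opt_frac_makespan[OF assms(1) _ assms(2)] makespan
    by (intro antisym) auto
  ultimately show ?thesis
    using sum_inverse_times_pos[OF assms(1) _ assms(2)] by simp
qed

definition diag_times :: "real \<Rightarrow> nat \<Rightarrow> nat \<Rightarrow> real" where
  "diag_times L i j = (if i = j then 1 else L)"

lemma valid_times_diag_times: "L > 0 \<Longrightarrow> valid_times n m (diag_times L)"
  unfolding valid_times_def diag_times_def by auto

lemma frac_makespan_prop_mech_diag_times:
  assumes "1 \<le> m" "m \<le> n" "L > 0"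
  shows "frac_makespan n m (prop_mech n (diag_times L)) (diag_times L) (diag_times L)
           = real m * L / (L + real n - 1)"
proof -
  have speed_sum: "(\<Sum>k<n. inverse (diag_times L k j)) = (L + real n - 1) / L"
    if "j < n" for j
  proof -
    have "(\<Sum>k<n. inverse (diag_times L k j))
        = (\<Sum>k<n. inverse L + (if k = j then 1 - inverse L else 0))"
      unfolding diag_times_def by (intro sum.cong) auto
    also have "\<dots> = real n * inverse L + (1 - inverse L)"
      using that by (simp add: sum.distrib)
    also have "\<dots> = (L + real n - 1) / L"
      using assms(3) by (simp add: field_simps)
    finally show ?thesis .
  qed
  have "frac_makespan n m (prop_mech n (diag_times L)) (diag_times L) (diag_times L)
      = (\<Sum>j<m. L / (L + real n - 1))"
    using assms frac_makespan_prop_mech[OF valid_times_diag_times[OF assms(3)], of n m]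
    by (simp add: speed_sum)
  then show ?thesis by simp
qed

lemma opt_frac_makespan_diag_times:
  assumes "1 \<le> m" "m \<le> n" "L > 0"
  shows "0 < opt_frac_makespan n m (diag_times L)" "opt_frac_makespan n m (diag_times L) \<le> 1"
proof -
  have valid: "valid_times n m (diag_times L)"
    using valid_times_diag_times[OF assms(3)] .
  have "0 < 1 / (\<Sum>k<n. inverse (diag_times L k 0))"
    using sum_inverse_times_pos[OF valid _ order_trans[OF assms(1,2)], of 0] assms(1) by simp
  also have "\<dots> \<le> opt_frac_makespan n m (diag_times L)"
    using inverse_speed_sum_le_opt_frac_makespan[OF valid _ order_trans[OF assms(1,2)], of 0]
      assms(1) by simp
  finally show "0 < opt_frac_makespan n m (diag_times L)" .
  define \<alpha> :: "nat \<Rightarrow> nat \<Rightarrow> real" where "\<alpha> i j = (if i = j then 1 else 0)" for i j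
  \<comment> \<open>task \<open>j\<close> goes entirely to machine \<open>j\<close>, which needs \<open>m \<le> n\<close>\<close>
  have feasible: "feasible_alloc n m \<alpha>"
    unfolding feasible_alloc_def \<alpha>_def using assms by (auto simp: sum.delta)
  have "frac_makespan n m \<alpha> (diag_times L) (diag_times L) \<le> 1"
    unfolding frac_makespan_truthful
  proof (rule Max.boundedI)
    fix a assume "a \<in> (\<lambda>i. \<Sum>j<m. \<alpha> i j * diag_times L i j) ` {..<n}"
    then obtain i where "a = (\<Sum>j<m. \<alpha> i j * diag_times L i j)" by blast
    also have "\<dots> = (\<Sum>j<m. if i = j then 1 else 0)"
      unfolding \<alpha>_def diag_times_def by (intro sum.cong) auto
    finally show "a \<le> 1" by (simp add: sum.delta')
  qed (use assms in \<open>auto simp: lessThan_empty_iff\<close>)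
  then show "opt_frac_makespan n m (diag_times L) \<le> 1"
    using opt_frac_makespan_le[OF valid feasible assms(1)] assms by linarith
qed

lemma prop_mech_ratio_diag_times:
  assumes "1 \<le> m" "m \<le> n" "L > 0"
  shows "real m * L / (L + real n - 1)
           \<le> frac_makespan n m (prop_mech n (diag_times L)) (diag_times L) (diag_times L)
               / opt_frac_makespan n m (diag_times L)"
  using opt_frac_makespan_diag_times[OF assms] assms
  by (simp add: frac_makespan_prop_mech_diag_times divide_left_mono)

theorem theorem7:
  fixes n m :: nat
  assumes "n \<ge> 1"
  shows "prop_approx_ratio n 1 = 1 \<and>
         (1 \<le> m \<and> m \<le> n \<longrightarrow> ereal (real m) \<le> prop_approx_ratio n m)"
proof (intro conjI impI)
  have "prop_approx_ratio n 1 = (SUP t\<in>{t. valid_times n 1 t}. ereal 1)"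
    unfolding prop_approx_ratio_def
    by (intro SUP_cong refl) (metis mem_Collect_eq prop_mech_ratio_single_task assms)
  also have "\<dots> = 1"
    unfolding one_ereal_def using valid_times_diag_times[of 1 n 1] by (intro SUP_const) auto
  finally show "prop_approx_ratio n 1 = 1" .
next
  assume m: "1 \<le> m \<and> m \<le> n"
  have "((\<lambda>L. ereal (real m * L / (L + real n - 1))) \<longlongrightarrow> ereal (real m)) at_top"
    by (intro tendsto_ereal) real_asymp
  moreover have "\<forall>\<^sub>F L in at_top. ereal (real m * L / (L + real n - 1)) \<le> prop_approx_ratio n m"
  proof (rule eventually_at_top_linorderI[of 1])
    fix L :: real assume "L \<ge> 1"
    then show "ereal (real m * L / (L + real n - 1)) \<le> prop_approx_ratio n m"
      unfolding prop_approx_ratio_def using m prop_mech_ratio_diag_times[of m n L]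
      by (intro SUP_upper2[of "diag_times L"]) (auto intro: valid_times_diag_times)
  qed
  ultimately show "ereal (real m) \<le> prop_approx_ratio n m"
    by (rule tendsto_upperbound) simp
qed

end
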